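(* In the ongoing market with warehouses described in the context, suppose $\alpha_2\ge1$, $\lambda\alpha_1<1$, and at time $t$ we have $t-\tau_i(t)\le1$ for all $i$ and $\sum_ip_ix_i\le M$. Then at time $t$, \[ \sum_iw_ip_i\le\frac{\phi}{1-\lambda\alpha_1}+M . \]
   Context: Market: $n$ goods with daily supply rates $w_i>0$, demand functions $x_i:(0,\infty)^n\to(0,\infty)$; $M>0$ is the daily supply of money. Dynamics: continuous time; prices $p(t)$ piecewise constant; $x_i(t)=x_i(p(t))$. Each good has a warehouse with stock $s_i(t)$, $\frac{ds_i}{dt}=w_i-x_i(t)$, target $s_i^*$, parameter $\kappa>0$, and target demand $\tilde w_i(t)=w_i+\kappa(s_i(t)-s_i^* )$. $\tau_i(t)$ is the last update time of $p_i$ that is $\le t$; $\bar x_i(t)=\frac{1}{t-\tau_i(t)}\int_{\tau_i(t)}^tx_i(s)ds$ (and $\bar x_i=x_i$ when $t=\tau_i(t)$). $\mathrm{span}(a,b,c)=\max-\min$ of $a,b,c$. Potential $\phi=\sum_i\phi_i$, $\phi_i=p_i\big[\mathrm{span}(x_i,\bar x_i,\tilde w_i)-\lambda\alpha_1(t-\tau_i)|\bar x_i-\tilde w_i|+\alpha_2|\tilde w_i-w_i|\big]$, with constants $\lambda,\alpha_1,\alpha_2>0$. *)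

theory Defs
  imports "HOL-Analysis.Analysis"
begin

text \<open>Prices p :: real => 'i => real (time to price vector),
  demand xd :: ('i => real) => 'i => real (price vector to demand vector),
  tau i t is the last update time of p_i that is at most t, s t i the stock of good i.\<close>

definition span3 :: "real \<Rightarrow> real \<Rightarrow> real \<Rightarrow> real" where
  "span3 a b c = max a (max b c) - min a (min b c)"

definition xbar :: "(('i \<Rightarrow> real) \<Rightarrow> 'i \<Rightarrow> real) \<Rightarrow> (real \<Rightarrow> 'i \<Rightarrow> real)
    \<Rightarrow> ('i \<Rightarrow> real \<Rightarrow> real) \<Rightarrow> 'i \<Rightarrow> real \<Rightarrow> real" where
  "xbar xd p tau i t =
     (if t = tau i t then xd (p t) i
      else integral {tau i t..t} (\<lambda>u. xd (p u) i) / (t - tau i t))"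

definition wtilde :: "('i \<Rightarrow> real) \<Rightarrow> real \<Rightarrow> ('i \<Rightarrow> real) \<Rightarrow> (real \<Rightarrow> 'i \<Rightarrow> real)
    \<Rightarrow> 'i \<Rightarrow> real \<Rightarrow> real" where
  "wtilde w kappa sstar s i t = w i + kappa * (s t i - sstar i)"

definition phi_i :: "('i \<Rightarrow> real) \<Rightarrow> (('i \<Rightarrow> real) \<Rightarrow> 'i \<Rightarrow> real) \<Rightarrow> (real \<Rightarrow> 'i \<Rightarrow> real)
    \<Rightarrow> ('i \<Rightarrow> real \<Rightarrow> real) \<Rightarrow> (real \<Rightarrow> 'i \<Rightarrow> real) \<Rightarrow> ('i \<Rightarrow> real) \<Rightarrow> real
    \<Rightarrow> real \<Rightarrow> real \<Rightarrow> real \<Rightarrow> 'i \<Rightarrow> real \<Rightarrow> real" where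
  "phi_i w xd p tau s sstar kappa lam alpha1 alpha2 i t =
     p t i * (span3 (xd (p t) i) (xbar xd p tau i t) (wtilde w kappa sstar s i t)
              - lam * alpha1 * (t - tau i t) * \<bar>xbar xd p tau i t - wtilde w kappa sstar s i t\<bar>
              + alpha2 * \<bar>wtilde w kappa sstar s i t - w i\<bar>)"

definition phi :: "('i::finite \<Rightarrow> real) \<Rightarrow> (('i \<Rightarrow> real) \<Rightarrow> 'i \<Rightarrow> real) \<Rightarrow> (real \<Rightarrow> 'i \<Rightarrow> real)
    \<Rightarrow> ('i \<Rightarrow> real \<Rightarrow> real) \<Rightarrow> (real \<Rightarrow> 'i \<Rightarrow> real) \<Rightarrow> ('i \<Rightarrow> real) \<Rightarrow> real
    \<Rightarrow> real \<Rightarrow> real \<Rightarrow> real \<Rightarrow> real \<Rightarrow> real" where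
  "phi w xd p tau s sstar kappa lam alpha1 alpha2 t =
     (\<Sum>i\<in>UNIV. phi_i w xd p tau s sstar kappa lam alpha1 alpha2 i t)"

text \<open>The ongoing market with warehouses, time running over [0, infinity).
  Prices are positive; p_i is constant on [tau_i(t), t] and changes at tau_i(t) (unless tau_i(t)=0);
  stocks evolve by ds_i/dt = w_i - x_i(t), written in integrated form.\<close>

definition market_run :: "('i::finite \<Rightarrow> real) \<Rightarrow> (('i \<Rightarrow> real) \<Rightarrow> 'i \<Rightarrow> real) \<Rightarrow> real
    \<Rightarrow> (real \<Rightarrow> 'i \<Rightarrow> real) \<Rightarrow> ('i \<Rightarrow> real \<Rightarrow> real) \<Rightarrow> (real \<Rightarrow> 'i \<Rightarrow> real)
    \<Rightarrow> ('i \<Rightarrow> real) \<Rightarrow> real \<Rightarrow> bool" where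
  "market_run w xd M p tau s sstar kappa \<longleftrightarrow>
     (\<forall>i. w i > 0) \<and> M > 0 \<and> kappa > 0 \<and>
     (\<forall>q. (\<forall>j. q j > 0) \<longrightarrow> (\<forall>i. xd q i > 0)) \<and>
     (\<forall>u\<ge>0. \<forall>i. p u i > 0) \<and>
     (\<forall>i t. t \<ge> 0 \<longrightarrow> 0 \<le> tau i t \<and> tau i t \<le> t \<and>
        (\<forall>u\<in>{tau i t..t}. p u i = p t i) \<and>
        (tau i t > 0 \<longrightarrow> (\<exists>e>0. \<forall>u\<in>{tau i t - e..<tau i t}. p u i \<noteq> p t i))) \<and>
     (\<forall>i t. t \<ge> 0 \<longrightarrow> (\<lambda>u. xd (p u) i) integrable_on {0..t} \<and>
        s t i = s 0 i + integral {0..t} (\<lambda>u. w i - xd (p u) i))"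

end

theory Submission
  imports Defs
begin

text \<open>
  Fix a good i and write X = x_i, Xb = xbar_i, Wt = wtilde_i, W = w_i,
  S = span(X, Xb, Wt), c = lam*alpha1 and d = t - tau_i(t) \<in> [0,1].  Then
    W - X \<le> |Wt - X| + |Wt - W| \<le> S + |Wt - W|,
  and since c*d*|Xb - Wt| \<le> c*S and alpha2 \<ge> 1 \<ge> 1 - c, the bracket of phi_i satisfies
    (1 - c)*(S + |Wt - W|) \<le> S - c*d*|Xb - Wt| + alpha2*|Wt - W|.
  Hence W - X \<le> bracket/(1 - c).  Multiplying by the positive price p_i gives
  w_i p_i \<le> phi_i/(1 - c) + p_i x_i; summing over all goods and using the spending
  bound \<Sum> p_i x_i \<le> M yields the theorem.
\<close>

lemma span3_ge_dist:
  shows "\<bar>b - c\<bar> \<le> span3 a b c" and "\<bar>c - a\<bar> \<le> span3 a b c"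
  unfolding span3_def by auto

lemma supply_gap_le_bracket:
  fixes X Xb Wt W c d a2 :: real
  assumes "0 \<le> d" "d \<le> 1" "0 < c" "c < 1" "1 \<le> a2"
  shows "W - X \<le> (span3 X Xb Wt - c * d * \<bar>Xb - Wt\<bar> + a2 * \<bar>Wt - W\<bar>) / (1 - c)"
proof -
  let ?S = "span3 X Xb Wt"
  have decay_le: "c * d * \<bar>Xb - Wt\<bar> \<le> c * ?S"
  proof -
    have "c * d * \<bar>Xb - Wt\<bar> \<le> c * 1 * \<bar>Xb - Wt\<bar>"
      using assms by (intro mult_right_mono mult_left_mono) auto
    also have "\<dots> \<le> c * ?S" using span3_ge_dist(1)[where a = X and b = Xb and c = Wt] assms by simp
    finally show ?thesis .
  qed
  have drift_ge: "(1 - c) * \<bar>Wt - W\<bar> \<le> a2 * \<bar>Wt - W\<bar>"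
    using assms by (intro mult_right_mono) auto
  have "W - X \<le> \<bar>Wt - X\<bar> + \<bar>Wt - W\<bar>" by linarith
  also have "\<dots> \<le> ?S + \<bar>Wt - W\<bar>" using span3_ge_dist(2)[where a = X and b = Xb and c = Wt] by simp
  finally have "(1 - c) * (W - X) \<le> (1 - c) * (?S + \<bar>Wt - W\<bar>)"
    using assms by (intro mult_left_mono) auto
  also have "\<dots> \<le> ?S - c * d * \<bar>Xb - Wt\<bar> + a2 * \<bar>Wt - W\<bar>"
    using decay_le drift_ge by (simp add: algebra_simps)
  finally show ?thesis
    using assms by (simp add: pos_le_divide_eq mult.commute)
qed

lemma market_run_price_pos:
  assumes "market_run w xd M p tau s sstar kappa" "0 \<le> t"
  shows "0 < p t i"
  using assms unfolding market_run_def by blast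

lemma market_run_tau_le:
  assumes "market_run w xd M p tau s sstar kappa" "0 \<le> t"
  shows "tau i t \<le> t"
  using assms unfolding market_run_def by blast

lemma price_weighted_supply_le:
  assumes run: "market_run w xd M p tau s sstar kappa"
    and "0 < lam * alpha1" "lam * alpha1 < 1" "1 \<le> alpha2"
    and "0 \<le> t" "t - tau i t \<le> 1"
  shows "w i * p t i \<le> phi_i w xd p tau s sstar kappa lam alpha1 alpha2 i t / (1 - lam * alpha1)
           + p t i * xd (p t) i"
proof -
  have pos: "0 < p t i" using market_run_price_pos[OF run] assms by blast
  have "0 \<le> t - tau i t" using market_run_tau_le[OF run] assms by simp
  then have gap: "w i - xd (p t) i
      \<le> (span3 (xd (p t) i) (xbar xd p tau i t) (wtilde w kappa sstar s i t)
          - lam * alpha1 * (t - tau i t) * \<bar>xbar xd p tau i t - wtilde w kappa sstar s i t\<bar>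
          + alpha2 * \<bar>wtilde w kappa sstar s i t - w i\<bar>) / (1 - lam * alpha1)"
    using assms by (intro supply_gap_le_bracket) auto
  have "p t i * (w i - xd (p t) i)
      \<le> phi_i w xd p tau s sstar kappa lam alpha1 alpha2 i t / (1 - lam * alpha1)"
    using mult_left_mono[OF gap, of "p t i"] pos unfolding phi_i_def by simp
  then show ?thesis by (simp add: algebra_simps)
qed

theorem mainTheorem12:
  fixes w :: "'i::finite \<Rightarrow> real" and xd :: "('i \<Rightarrow> real) \<Rightarrow> 'i \<Rightarrow> real"
    and M kappa lam alpha1 alpha2 t :: real
    and p s :: "real \<Rightarrow> 'i \<Rightarrow> real" and tau :: "'i \<Rightarrow> real \<Rightarrow> real" and sstar :: "'i \<Rightarrow> real"
  assumes "market_run w xd M p tau s sstar kappa"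
    and "lam > 0" and "alpha1 > 0" and "alpha2 > 0"
    and "alpha2 \<ge> 1" and "lam * alpha1 < 1"
    and "t \<ge> 0"
    and "\<forall>i. t - tau i t \<le> 1"
    and "(\<Sum>i\<in>UNIV. p t i * xd (p t) i) \<le> M"
  shows "(\<Sum>i\<in>UNIV. w i * p t i)
           \<le> phi w xd p tau s sstar kappa lam alpha1 alpha2 t / (1 - lam * alpha1) + M"
proof -
  let ?c = "lam * alpha1"
  have "(\<Sum>i\<in>UNIV. w i * p t i)
      \<le> (\<Sum>i\<in>UNIV. phi_i w xd p tau s sstar kappa lam alpha1 alpha2 i t / (1 - ?c)
           + p t i * xd (p t) i)"
    using assms by (intro sum_mono price_weighted_supply_le) auto
  also have "\<dots> = phi w xd p tau s sstar kappa lam alpha1 alpha2 t / (1 - ?c)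
      + (\<Sum>i\<in>UNIV. p t i * xd (p t) i)"
    unfolding phi_def by (simp add: sum.distrib sum_divide_distrib)
  also have "\<dots> \<le> phi w xd p tau s sstar kappa lam alpha1 alpha2 t / (1 - ?c) + M"
    using assms(9) by linarith
  finally show ?thesis .
qed

end
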